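(* Let $M$ be a finite monoid. Then the following are equivalent: (a) $M$ is a group; (b) $M$ is strongly sofic; (c) $M$ has no non-trivial idempotents (no $e\in M$ with $e^2=e\ne1_M$).
   Context: Hamming metric on $\operatorname{Map}(D)$ (monoid of maps $D\to D$, $D$ finite non-empty): $d_D^{\mathrm{Ham}}(f,g)=\frac{1}{|D|}|\{v:f(v)\ne g(v)\}|$. A monoid $M$ is strongly sofic if for every finite $K\subset M$ there is an integer $\Delta_K\ge1$ such that for every $\varepsilon>0$ there exist a non-empty finite set $D$ and a map $\sigma\colon M\to\operatorname{Map}(D)$ with (1) $\sigma(1_M)=\mathrm{Id}_D$; (2) $d_D^{\mathrm{Ham}}(\sigma(k_1k_2),\sigma(k_1)\sigma(k_2))\le\varepsilon$ for $k_1,k_2\in K$; (3) $d_D^{\mathrm{Ham}}(\sigma(k_1),\sigma(k_2))\ge1-\varepsilon$ for distinct $k_1,k_2\in K$; (4) $|\sigma(k)^{-1}(v)|\le\Delta_K$ for $k\in K$, $v\in D$. *)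

theory Defs
  imports Complex_Main "HOL-Algebra.Group"
begin

text \<open>Maps D \<Rightarrow> D on a finite non-empty set D, represented as functions on nat
  (D :: nat set); only values on D matter.\<close>

definition ham_dist :: "nat set \<Rightarrow> (nat \<Rightarrow> nat) \<Rightarrow> (nat \<Rightarrow> nat) \<Rightarrow> real" where
  "ham_dist D f g = real (card {v \<in> D. f v \<noteq> g v}) / real (card D)"

definition strongly_sofic :: "('a, 'b) monoid_scheme \<Rightarrow> bool" where
  "strongly_sofic M \<longleftrightarrow>
    (\<forall>K. K \<subseteq> carrier M \<and> finite K \<longrightarrow>
      (\<exists>\<Delta>::nat. \<Delta> \<ge> 1 \<and>
        (\<forall>\<epsilon>::real. \<epsilon> > 0 \<longrightarrow>
          (\<exists>(D::nat set) (\<sigma>::'a \<Rightarrow> nat \<Rightarrow> nat).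
             finite D \<and> D \<noteq> {} \<and>
             (\<forall>m \<in> carrier M. \<sigma> m ` D \<subseteq> D) \<and>
             (\<forall>v \<in> D. \<sigma> \<one>\<^bsub>M\<^esub> v = v) \<and>
             (\<forall>k1 \<in> K. \<forall>k2 \<in> K.
                ham_dist D (\<sigma> (k1 \<otimes>\<^bsub>M\<^esub> k2)) (\<sigma> k1 \<circ> \<sigma> k2) \<le> \<epsilon>) \<and>
             (\<forall>k1 \<in> K. \<forall>k2 \<in> K. k1 \<noteq> k2 \<longrightarrow>
                ham_dist D (\<sigma> k1) (\<sigma> k2) \<ge> 1 - \<epsilon>) \<and>
             (\<forall>k \<in> K. \<forall>v \<in> D. card {u \<in> D. \<sigma> k u = v} \<le> \<Delta>)))))"

end

theory Submission
  imports Defs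
begin

text \<open>
  A finite group is strongly sofic through its left regular action on itself, which is exactly
  multiplicative, free and by injective maps. If instead \<open>e * e = e \<noteq> 1\<close> and \<open>f = \<sigma>(e)\<close> comes
  from a sofic approximation of \<open>{e, 1}\<close>, then \<open>f\<close> agrees with \<open>f \<circ> f\<close> on a proportion at
  least \<open>1 - \<epsilon>\<close> of the points but has a proportion at most \<open>\<epsilon>\<close> of fixed points. Since \<open>f\<close> maps
  every point where \<open>f = f \<circ> f\<close> to a fixed point and has fibres of size at most \<open>\<Delta>\<close>, this
  forces \<open>1 - \<epsilon> \<le> \<Delta> \<epsilon>\<close>, which fails for small \<open>\<epsilon>\<close>. Finally, in a finite monoid some
  positive power \<open>x^m\<close> of each \<open>x\<close> is idempotent; if \<open>1\<close> is the only idempotent then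
  \<open>x^m = 1\<close>, so \<open>x^(m-1)\<close> is a left inverse of \<open>x\<close>.
\<close>

lemma (in monoid) nat_pow_collision:
  assumes fin: "finite (carrier G)" and x: "x \<in> carrier G"
  shows "\<exists>i j. i < j \<and> x [^] i = x [^] (j::nat)"
proof -
  let ?pow = "\<lambda>n::nat. x [^] n" and ?N = "{0..card (carrier G)}"
  have "?pow ` ?N \<subseteq> carrier G" using x by auto
  then have "card (?pow ` ?N) \<le> card (carrier G)" by (rule card_mono[OF fin])
  then have "\<not> inj_on ?pow ?N" by (intro pigeonhole) simp
  then obtain a b where "a \<noteq> b" and ab: "x [^] a = x [^] (b::nat)" unfolding inj_on_def by blast
  then consider "a < b" | "b < a" by linarith
  then show ?thesis
  proof cases
    case 1
    then show ?thesis using ab by blast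
  next
    case 2
    then show ?thesis using ab by (intro exI[of _ b] exI[of _ a]) simp
  qed
qed

lemma (in monoid) nat_pow_add_mult_period:
  assumes x: "x \<in> carrier G" and period: "x [^] (i + p) = x [^] (i::nat)"
  shows "x [^] (i + k * p) = x [^] i"
proof (induction k)
  case (Suc k)
  have "x [^] (i + Suc k * p) = x [^] (i + p) \<otimes> x [^] (k * p)"
    using x by (simp add: nat_pow_mult algebra_simps)
  also have "\<dots> = x [^] (i + k * p)" using x by (simp add: period nat_pow_mult)
  finally show ?case using Suc by simp
qed simp

lemma (in monoid) finite_idempotent_power:
  assumes fin: "finite (carrier G)" and x: "x \<in> carrier G"
  shows "\<exists>m::nat. m \<ge> 1 \<and> x [^] m \<otimes> x [^] m = x [^] m"
proof -
  obtain i j where "i < j" and ij: "x [^] i = x [^] (j::nat)"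
    using nat_pow_collision[OF fin x] by blast
  define p where "p = j - i"
  have "p \<ge> 1" and period: "x [^] (i + p) = x [^] i"
    using \<open>i < j\<close> ij by (auto simp: p_def)
  define m where "m = (i + 1) * p"
  have "m \<ge> i + 1" using mult_le_mono2[OF \<open>p \<ge> 1\<close>, of "i + 1"] by (simp add: m_def)
  have "x [^] m \<otimes> x [^] m = x [^] (m - i) \<otimes> x [^] (i + (i + 1) * p)"
    using x \<open>m \<ge> i + 1\<close> by (simp add: nat_pow_mult m_def add.assoc)
  also have "\<dots> = x [^] (m - i) \<otimes> x [^] i"
    using nat_pow_add_mult_period[OF x period, of "i + 1"] by simp
  also have "\<dots> = x [^] m" using x \<open>m \<ge> i + 1\<close> by (simp add: nat_pow_mult)
  finally show ?thesis using \<open>m \<ge> i + 1\<close> by (intro exI[of _ m]) simp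
qed

lemma (in monoid) group_if_finite_and_no_nontrivial_idempotent:
  assumes fin: "finite (carrier G)"
    and no_idem: "\<not> (\<exists>e \<in> carrier G. e \<otimes> e = e \<and> e \<noteq> \<one>)"
  shows "group G"
proof (rule group_l_invI)
  fix x assume x: "x \<in> carrier G"
  obtain m :: nat where "m \<ge> 1" and "x [^] m \<otimes> x [^] m = x [^] m"
    using finite_idempotent_power[OF fin x] by blast
  then have "x [^] (m - 1) \<otimes> x = \<one>"
    using no_idem x by (metis Suc_diff_le diff_Suc_1 nat_pow_Suc nat_pow_closed)
  then show "\<exists>y \<in> carrier G. y \<otimes> x = \<one>" using x by blast
qed

definition sofic_approximation ::
    "('a, 'b) monoid_scheme \<Rightarrow> 'a set \<Rightarrow> nat \<Rightarrow> real \<Rightarrow> nat set \<Rightarrow> ('a \<Rightarrow> nat \<Rightarrow> nat) \<Rightarrow> bool"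
  where
  "sofic_approximation M K \<Delta> \<epsilon> D \<sigma> \<longleftrightarrow>
     finite D \<and> D \<noteq> {} \<and>
     (\<forall>m \<in> carrier M. \<sigma> m ` D \<subseteq> D) \<and>
     (\<forall>v \<in> D. \<sigma> \<one>\<^bsub>M\<^esub> v = v) \<and>
     (\<forall>k1 \<in> K. \<forall>k2 \<in> K. ham_dist D (\<sigma> (k1 \<otimes>\<^bsub>M\<^esub> k2)) (\<sigma> k1 \<circ> \<sigma> k2) \<le> \<epsilon>) \<and>
     (\<forall>k1 \<in> K. \<forall>k2 \<in> K. k1 \<noteq> k2 \<longrightarrow> ham_dist D (\<sigma> k1) (\<sigma> k2) \<ge> 1 - \<epsilon>) \<and>
     (\<forall>k \<in> K. \<forall>v \<in> D. card {u \<in> D. \<sigma> k u = v} \<le> \<Delta>)"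

lemma strongly_sofic_iff_sofic_approximation:
  "strongly_sofic M \<longleftrightarrow>
     (\<forall>K. K \<subseteq> carrier M \<and> finite K \<longrightarrow>
        (\<exists>\<Delta>. \<Delta> \<ge> 1 \<and> (\<forall>\<epsilon> > 0. \<exists>D \<sigma>. sofic_approximation M K \<Delta> \<epsilon> D \<sigma>)))"
  unfolding strongly_sofic_def sofic_approximation_def by blast

lemma ham_dist_cong_right:
  assumes "\<And>v. v \<in> D \<Longrightarrow> g v = g' v"
  shows "ham_dist D f g = ham_dist D f g'"
  unfolding ham_dist_def using assms by (metis (mono_tags, lifting) Collect_cong)

lemma ham_dist_eq_0:
  assumes "\<And>v. v \<in> D \<Longrightarrow> f v = g v"
  shows "ham_dist D f g = 0"
proof -
  have empty: "{v \<in> D. f v \<noteq> g v} = {}" using assms by blast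
  show ?thesis unfolding ham_dist_def empty by simp
qed

lemma ham_dist_eq_1:
  assumes "finite D" "D \<noteq> {}" "\<And>v. v \<in> D \<Longrightarrow> f v \<noteq> g v"
  shows "ham_dist D f g = 1"
proof -
  have all: "{v \<in> D. f v \<noteq> g v} = D" using assms(3) by blast
  show ?thesis unfolding ham_dist_def all using assms(1,2) by simp
qed

lemma one_minus_ham_dist:
  assumes "finite D" "D \<noteq> {}"
  shows "1 - ham_dist D f g = real (card {v \<in> D. f v = g v}) / real (card D)"
proof -
  have "card {v \<in> D. f v = g v} + card {v \<in> D. f v \<noteq> g v} = card D"
    using assms(1) by (subst card_Un_disjoint[symmetric]) (auto intro: arg_cong[where f = card])
  then show ?thesis
    using assms by (simp add: ham_dist_def field_simps flip: of_nat_add)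
qed

lemma card_le_mult_card_image:
  assumes "finite A" "\<And>w. w \<in> f ` A \<Longrightarrow> card {u \<in> A. f u = w} \<le> \<Delta>"
  shows "card A \<le> \<Delta> * card (f ` A)"
proof -
  have "A = (\<Union>w \<in> f ` A. {u \<in> A. f u = w})" by blast
  then have "card A \<le> (\<Sum>w \<in> f ` A. card {u \<in> A. f u = w})"
    using card_UN_le[of "f ` A"] assms(1) by (metis finite_imageI)
  also have "\<dots> \<le> (\<Sum>w \<in> f ` A. \<Delta>)" using assms(2) by (rule sum_mono)
  also have "\<dots> = \<Delta> * card (f ` A)" by simp
  finally show ?thesis .
qed

lemma card_agree_square_le_fixed_points:
  assumes "finite D" "f ` D \<subseteq> D" "\<And>v. v \<in> D \<Longrightarrow> card {u \<in> D. f u = v} \<le> \<Delta>"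
  shows "card {v \<in> D. f v = f (f v)} \<le> \<Delta> * card {v \<in> D. f v = v}"
proof -
  let ?A = "{v \<in> D. f v = f (f v)}" and ?Fix = "{v \<in> D. f v = v}"
  have image: "f ` ?A \<subseteq> ?Fix" using assms(2) by auto
  have "card ?A \<le> \<Delta> * card (f ` ?A)"
  proof (rule card_le_mult_card_image)
    fix w assume "w \<in> f ` ?A"
    then have "card {u \<in> ?A. f u = w} \<le> card {u \<in> D. f u = w}"
      using assms(1) by (intro card_mono) auto
    also have "\<dots> \<le> \<Delta>" using \<open>w \<in> f ` ?A\<close> image assms(3) by blast
    finally show "card {u \<in> ?A. f u = w} \<le> \<Delta>" .
  qed (use assms(1) in simp)
  also have "\<dots> \<le> \<Delta> * card ?Fix"
    using image assms(1) by (intro mult_le_mono2 card_mono) auto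
  finally show ?thesis .
qed

lemma ham_dist_square_le_fixed_points:
  assumes "finite D" "D \<noteq> {}" "f ` D \<subseteq> D"
    and "\<And>v. v \<in> D \<Longrightarrow> card {u \<in> D. f u = v} \<le> \<Delta>"
  shows "1 - ham_dist D f (f \<circ> f) \<le> real \<Delta> * (1 - ham_dist D f id)"
proof -
  let ?A = "{v \<in> D. f v = f (f v)}" and ?Fix = "{v \<in> D. f v = v}"
  have "real (card ?A) \<le> real (\<Delta> * card ?Fix)"
    using card_agree_square_le_fixed_points[OF assms(1,3,4)] by (simp only: of_nat_le_iff)
  then have "real (card ?A) / real (card D) \<le> real \<Delta> * (real (card ?Fix) / real (card D))"
    unfolding of_nat_mult times_divide_eq_right by (rule divide_right_mono) simp
  then show ?thesis using assms(1,2) by (simp add: one_minus_ham_dist)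
qed

lemma no_nontrivial_idempotent_if_strongly_sofic:
  fixes M :: "('a, 'b) monoid_scheme" (structure)
  assumes "monoid M" and sofic: "strongly_sofic M"
  shows "\<not> (\<exists>e \<in> carrier M. e \<otimes> e = e \<and> e \<noteq> \<one>)"
proof
  assume "\<exists>e \<in> carrier M. e \<otimes> e = e \<and> e \<noteq> \<one>"
  then obtain e where e: "e \<in> carrier M" "e \<otimes> e = e" "e \<noteq> \<one>" by blast
  have "{e, \<one>} \<subseteq> carrier M" using e(1) monoid.one_closed[OF \<open>monoid M\<close>] by simp
  then obtain \<Delta> where approx: "\<And>\<epsilon>. \<epsilon> > 0 \<Longrightarrow> \<exists>D \<sigma>. sofic_approximation M {e, \<one>} \<Delta> \<epsilon> D \<sigma>"
    using sofic unfolding strongly_sofic_iff_sofic_approximation by blast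
  define \<epsilon> :: real where "\<epsilon> = 1 / (2 * (real \<Delta> + 1))"
  obtain D \<sigma> where "sofic_approximation M {e, \<one>} \<Delta> \<epsilon> D \<sigma>"
    using approx by (fastforce simp: \<epsilon>_def)
  note approximation = this[unfolded sofic_approximation_def]
  have D: "finite D" "D \<noteq> {}" and closed: "\<sigma> e ` D \<subseteq> D"
    and unit: "\<And>v. v \<in> D \<Longrightarrow> \<sigma> \<one> v = v"
    and fibres: "\<And>v. v \<in> D \<Longrightarrow> card {u \<in> D. \<sigma> e u = v} \<le> \<Delta>"
    using approximation e(1) by auto
  have square: "ham_dist D (\<sigma> e) (\<sigma> e \<circ> \<sigma> e) \<le> \<epsilon>"
    and far: "ham_dist D (\<sigma> e) (\<sigma> \<one>) \<ge> 1 - \<epsilon>"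
    using approximation e(2,3) by auto
  have "ham_dist D (\<sigma> e) id \<ge> 1 - \<epsilon>"
    using far ham_dist_cong_right[of D "\<sigma> \<one>" id] unit by simp
  have "1 - \<epsilon> \<le> 1 - ham_dist D (\<sigma> e) (\<sigma> e \<circ> \<sigma> e)" using square by simp
  also have "\<dots> \<le> real \<Delta> * (1 - ham_dist D (\<sigma> e) id)"
    by (rule ham_dist_square_le_fixed_points[OF D closed fibres])
  also have "\<dots> \<le> real \<Delta> * \<epsilon>"
    using \<open>ham_dist D (\<sigma> e) id \<ge> 1 - \<epsilon>\<close> by (intro mult_left_mono) simp_all
  finally have "1 - \<epsilon> \<le> real \<Delta> * \<epsilon>" .
  moreover have "(real \<Delta> + 1) * \<epsilon> = 1 / 2" by (simp add: \<epsilon>_def)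
  ultimately show False by (simp add: algebra_simps)
qed

lemma strongly_sofic_if_free_injective_action:
  fixes M :: "('a, 'b) monoid_scheme" (structure)
    and D :: "nat set" and \<sigma> :: "'a \<Rightarrow> nat \<Rightarrow> nat"
  assumes D: "finite D" "D \<noteq> {}"
    and closed: "\<And>m. m \<in> carrier M \<Longrightarrow> \<sigma> m ` D \<subseteq> D"
    and unit: "\<And>v. v \<in> D \<Longrightarrow> \<sigma> \<one> v = v"
    and action: "\<And>a b v. \<lbrakk>a \<in> carrier M; b \<in> carrier M; v \<in> D\<rbrakk> \<Longrightarrow> \<sigma> (a \<otimes> b) v = \<sigma> a (\<sigma> b v)"
    and free: "\<And>a b v. \<lbrakk>a \<in> carrier M; b \<in> carrier M; a \<noteq> b; v \<in> D\<rbrakk> \<Longrightarrow> \<sigma> a v \<noteq> \<sigma> b v"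
    and inj: "\<And>a. a \<in> carrier M \<Longrightarrow> inj_on (\<sigma> a) D"
  shows "strongly_sofic M"
  unfolding strongly_sofic_iff_sofic_approximation
proof (intro allI impI exI[of _ 1] conjI)
  fix K :: "'a set" and \<epsilon> :: real
  assume K: "K \<subseteq> carrier M \<and> finite K" and "\<epsilon> > 0"
  have "card {u \<in> D. \<sigma> k u = v} \<le> 1" if "k \<in> K" for k v
    using card_vimage_inj_on_le[OF inj, of k "{v}"] K that by (auto simp: vimage_def Int_def conj_commute)
  moreover have "ham_dist D (\<sigma> (k1 \<otimes> k2)) (\<sigma> k1 \<circ> \<sigma> k2) = 0" if "k1 \<in> K" "k2 \<in> K" for k1 k2
    using K that action by (intro ham_dist_eq_0) auto
  moreover have "ham_dist D (\<sigma> k1) (\<sigma> k2) = 1" if "k1 \<in> K" "k2 \<in> K" "k1 \<noteq> k2" for k1 k2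
    using K that free D by (intro ham_dist_eq_1) auto
  ultimately show "\<exists>D \<sigma>. sofic_approximation M K 1 \<epsilon> D \<sigma>"
    unfolding sofic_approximation_def using D closed unit \<open>\<epsilon> > 0\<close>
    by (intro exI[of _ D] exI[of _ \<sigma>]) auto
qed simp

lemma (in group) strongly_sofic_if_finite:
  assumes fin: "finite (carrier G)"
  shows "strongly_sofic G"
proof -
  define D where "D = {0..<card (carrier G)}"
  obtain enc :: "'a \<Rightarrow> nat" where enc: "bij_betw enc (carrier G) D"
    using ex_bij_betw_finite_nat[OF fin] unfolding D_def by blast
  define dec where "dec = inv_into (carrier G) enc"
  have dec_enc: "\<And>a. a \<in> carrier G \<Longrightarrow> dec (enc a) = a"
    and enc_dec: "\<And>v. v \<in> D \<Longrightarrow> enc (dec v) = v"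
    using enc by (simp_all add: dec_def bij_betw_inv_into_left bij_betw_inv_into_right)
  have enc_in: "\<And>a. a \<in> carrier G \<Longrightarrow> enc a \<in> D"
    and dec_in: "\<And>v. v \<in> D \<Longrightarrow> dec v \<in> carrier G"
    using enc bij_betw_inv_into[OF enc] by (simp_all add: dec_def bij_betwE)
  show ?thesis
  proof (rule strongly_sofic_if_free_injective_action[where \<sigma> = "\<lambda>a v. enc (a \<otimes> dec v)"])
    show "finite D" by (simp add: D_def)
    show "D \<noteq> {}" using enc_in[OF one_closed] by blast
  next
    fix a assume "a \<in> carrier G"
    then show "(\<lambda>v. enc (a \<otimes> dec v)) ` D \<subseteq> D" using dec_in enc_in by blast
  next
    fix v assume "v \<in> D"
    then show "enc (\<one> \<otimes> dec v) = v" using dec_in enc_dec by simp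
  next
    fix a b v assume "a \<in> carrier G" "b \<in> carrier G" "v \<in> D"
    then show "enc (a \<otimes> b \<otimes> dec v) = enc (a \<otimes> dec (enc (b \<otimes> dec v)))"
      using dec_in by (simp add: dec_enc m_assoc)
  next
    fix a b v assume "a \<in> carrier G" "b \<in> carrier G" "a \<noteq> b" "v \<in> D"
    then show "enc (a \<otimes> dec v) \<noteq> enc (b \<otimes> dec v)"
      using dec_in by (metis dec_enc m_closed right_cancel)
  next
    fix a assume "a \<in> carrier G"
    show "inj_on (\<lambda>v. enc (a \<otimes> dec v)) D"
    proof (rule inj_onI)
      fix v w assume "v \<in> D" "w \<in> D" "enc (a \<otimes> dec v) = enc (a \<otimes> dec w)"
      then have "a \<otimes> dec v = a \<otimes> dec w" using \<open>a \<in> carrier G\<close> dec_in by (metis dec_enc m_closed)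
      then have "dec v = dec w" using \<open>a \<in> carrier G\<close> \<open>v \<in> D\<close> \<open>w \<in> D\<close> dec_in by simp
      then show "v = w" using \<open>v \<in> D\<close> \<open>w \<in> D\<close> enc_dec by metis
    qed
  qed
qed

theorem corollary3p17:
  fixes M :: "('a, 'b) monoid_scheme"
  assumes "monoid M" and "finite (carrier M)"
  shows "(group M \<longleftrightarrow> strongly_sofic M) \<and>
         (strongly_sofic M \<longleftrightarrow>
            \<not> (\<exists>e \<in> carrier M. e \<otimes>\<^bsub>M\<^esub> e = e \<and> e \<noteq> \<one>\<^bsub>M\<^esub>))"
  using group.strongly_sofic_if_finite[OF _ assms(2)]
    no_nontrivial_idempotent_if_strongly_sofic[OF assms(1)]
    monoid.group_if_finite_and_no_nontrivial_idempotent[OF assms]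
  by blast

end
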